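(* In the two-period difference-in-differences setting with anticipation described in the context, suppose: (i) $\{Y_{i0}(0,1),Y_{i0}(1,1),Y_{i0}(0),Y_{i1}(0),Y_{i1}(1),D_i,A_i\}_{i=1}^n$ are i.i.d. across $i$; (ii) $Y_{i0}(0)=Y_{i0}(0,1)$; (iii) $\mathbb{E}[g(Y_{i1}(0))-g(Y_{i0}(0))\mid D_i=1]=\mathbb{E}[g(Y_{i1}(0))-g(Y_{i0}(0))\mid D_i=0]$; (iv) $\mathbb{E}[g(Y_{i0}(0,0))\mid D_i=1,A_i=0]=\mathbb{E}[g(Y_{i0}(0,0))\mid D_i=1,A_i=1]$; (v) $g(Y_{i0})\in[a,b]$. Then $\mu_g$ is partially identified in the closed interval $[\mu_{g,l},\mu_{g,u}]$, where \[\mu_{g,l}=\mathbb{E}\left[\frac{D_i-\mathbb{P}[D_i=1]}{\mathbb{P}[D_i=1](1-\mathbb{P}[D_i=1])}g(Y_{i1})+\frac{1-D_i}{1-\mathbb{P}[D_i=1]}g(Y_{i0})-b\right],\] \[\mu_{g,u}=\mathbb{E}\left[\frac{D_i-\mathbb{P}[D_i=1]}{\mathbb{P}[D_i=1](1-\mathbb{P}[D_i=1])}g(Y_{i1})+\frac{1-D_i}{1-\mathbb{P}[D_i=1]}g(Y_{i0})-a\right].\]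
   Context: Two periods $t\in\{0,1\}$, units $i=1,\dots,n$, observed binary treatment $D_i$ (applied in period 1) with $0<\mathbb{P}[D_i=1]<1$, unobserved binary anticipation status $A_i$ in period 0. Potential outcomes $Y_{i1}(d)$, $d\in\{0,1\}$; $Y_{i0}(0)$ (also written $Y_{i0}(0,0)$) the period-0 outcome without anticipation or treatment; $Y_{i0}(a,1)$ the period-0 outcome of a unit to be treated with anticipation status $a$. Observed: $Y_{i1}=D_iY_{i1}(1)+(1-D_i)Y_{i1}(0)$, $Y_{i0}=(1-D_i)Y_{i0}(0)+D_i[(1-A_i)Y_{i0}(0,1)+A_iY_{i0}(1,1)]$. $g$ is a known measurable real function with finite expectations; $a\le b$ are real constants. $\mu_g=\mathbb{E}[g(Y_{i1}(1))-g(Y_{i1}(0))\mid D_i=1]$. *)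

theory Defs
  imports "HOL-Probability.Probability"
begin

definition cond_mean :: "'s measure \<Rightarrow> ('s \<Rightarrow> real) \<Rightarrow> 's set \<Rightarrow> real" where
  "cond_mean M X B = (\<integral>\<omega>. indicator B \<omega> * X \<omega> \<partial>M) / measure M B"

definition obs_Y1 :: "('s \<Rightarrow> real) \<Rightarrow> ('s \<Rightarrow> real) \<Rightarrow> ('s \<Rightarrow> real) \<Rightarrow> 's \<Rightarrow> real" where
  "obs_Y1 D Y1_1 Y1_0 \<omega> = D \<omega> * Y1_1 \<omega> + (1 - D \<omega>) * Y1_0 \<omega>"

definition obs_Y0 :: "('s \<Rightarrow> real) \<Rightarrow> ('s \<Rightarrow> real) \<Rightarrow> ('s \<Rightarrow> real) \<Rightarrow> ('s \<Rightarrow> real)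
    \<Rightarrow> ('s \<Rightarrow> real) \<Rightarrow> 's \<Rightarrow> real" where
  "obs_Y0 D A Y0_0 Y0_01 Y0_11 \<omega> =
     (1 - D \<omega>) * Y0_0 \<omega> + D \<omega> * ((1 - A \<omega>) * Y0_01 \<omega> + A \<omega> * Y0_11 \<omega>)"

end

theory Submission
  imports Defs
begin

text \<open>Write p = P[D = 1]. The weight (D - p) / (p (1 - p)) is 1/p on the treated and -1/(1 - p)
  on the untreated, so the weighted estimand with constant c equals
  E[g(Y1(1)) | D = 1] - E[g(Y1(0)) - g(Y0(0)) | D = 0] - c. Parallel trends moves the second term
  to the treated, giving mu_g + E[g(Y0(0)) | D = 1] - c. The treated split into the disjoint events
  A = 0 and A = 1, on which g(Y0(0)) has the same conditional mean; hence
  E[g(Y0(0)) | D = 1] = E[g(Y0(0)) | D = 1, A = 0], and on that event the observed period-0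
  outcome is Y0(0,1) = Y0(0), so this mean lies in [a, b]. Taking c = b and c = a gives the bounds.\<close>

lemma integrable_indicator_times:
  fixes f :: "'a \<Rightarrow> real"
  assumes "S \<in> sets M" "integrable M f"
  shows "integrable M (\<lambda>\<omega>. indicator S \<omega> * f \<omega>)"
  using integrable_mult_indicator[OF assms] by simp

lemma cond_mean_diff:
  fixes X Y :: "'s \<Rightarrow> real"
  assumes "S \<in> sets M" "integrable M X" "integrable M Y"
  shows "cond_mean M (\<lambda>\<omega>. X \<omega> - Y \<omega>) S = cond_mean M X S - cond_mean M Y S"
  using assms by (simp add: cond_mean_def right_diff_distrib diff_divide_distrib integrable_indicator_times)

lemma (in finite_measure) cond_mean_in_interval:
  fixes X :: "'a \<Rightarrow> real"
  assumes S: "S \<in> sets M" "0 < measure M S" and X: "integrable M X"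
    and bounds: "\<And>\<omega>. \<omega> \<in> S \<Longrightarrow> X \<omega> \<in> {a..b}"
  shows "cond_mean M X S \<in> {a..b}"
proof -
  note int = integrable_indicator_times[OF S(1)]
  have "(\<integral>\<omega>. indicator S \<omega> * a \<partial>M) \<le> (\<integral>\<omega>. indicator S \<omega> * X \<omega> \<partial>M)"
    by (rule integral_mono[OF int[OF integrable_const] int[OF X]])
      (use bounds in \<open>auto simp: indicator_def\<close>)
  moreover have "(\<integral>\<omega>. indicator S \<omega> * X \<omega> \<partial>M) \<le> (\<integral>\<omega>. indicator S \<omega> * b \<partial>M)"
    by (rule integral_mono[OF int[OF X] int[OF integrable_const]])
      (use bounds in \<open>auto simp: indicator_def\<close>)
  ultimately show ?thesis
    using S by (simp add: cond_mean_def field_simps)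
qed

lemma (in finite_measure) cond_mean_Un_eq:
  fixes X :: "'a \<Rightarrow> real"
  assumes sets: "S \<in> sets M" "T \<in> sets M" and disj: "S \<inter> T = {}"
    and pos: "0 < measure M S" "0 < measure M T" and X: "integrable M X"
    and eq: "cond_mean M X S = cond_mean M X T"
  shows "cond_mean M X (S \<union> T) = cond_mean M X S"
proof -
  have "(\<integral>\<omega>. indicator (S \<union> T) \<omega> * X \<omega> \<partial>M)
      = (\<integral>\<omega>. indicator S \<omega> * X \<omega> + indicator T \<omega> * X \<omega> \<partial>M)"
    by (rule Bochner_Integration.integral_cong) (use disj in \<open>auto simp: indicator_def\<close>)
  also have "\<dots> = (\<integral>\<omega>. indicator S \<omega> * X \<omega> \<partial>M) + (\<integral>\<omega>. indicator T \<omega> * X \<omega> \<partial>M)"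
    using sets X by (simp add: integrable_indicator_times)
  also have "\<dots> = cond_mean M X S * (measure M S + measure M T)"
    using eq pos by (simp add: cond_mean_def field_simps)
  also have "measure M S + measure M T = measure M (S \<union> T)"
    using sets disj by (simp add: finite_measure_Union)
  finally have "(\<integral>\<omega>. indicator (S \<union> T) \<omega> * X \<omega> \<partial>M) = cond_mean M X S * measure M (S \<union> T)" .
  moreover have "0 < measure M (S \<union> T)"
    using sets disj pos by (simp add: finite_measure_Union)
  ultimately show ?thesis
    by (simp add: cond_mean_def)
qed

lemma (in prob_space) integral_did_ipw:
  fixes D U V X Z :: "'a \<Rightarrow> real"
  defines "p \<equiv> measure M {\<omega> \<in> space M. D \<omega> = 1}"
  assumes D: "D \<in> borel_measurable M" "\<And>\<omega>. \<omega> \<in> space M \<Longrightarrow> D \<omega> \<in> {0, 1}"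
    and p: "0 < p" "p < 1"
    and X: "integrable M X" "\<And>\<omega>. \<omega> \<in> space M \<Longrightarrow> D \<omega> = 1 \<Longrightarrow> U \<omega> = X \<omega>"
    and Z: "integrable M Z" "\<And>\<omega>. \<omega> \<in> space M \<Longrightarrow> D \<omega> = 0 \<Longrightarrow> U \<omega> - V \<omega> = Z \<omega>"
  shows "(\<integral>\<omega>. (D \<omega> - p) / (p * (1 - p)) * U \<omega> + (1 - D \<omega>) / (1 - p) * V \<omega> - c \<partial>M)
    = cond_mean M X {\<omega> \<in> space M. D \<omega> = 1} - cond_mean M Z {\<omega> \<in> space M. D \<omega> = 0} - c"
proof -
  define T1 where "T1 = {\<omega> \<in> space M. D \<omega> = 1}"
  define T0 where "T0 = {\<omega> \<in> space M. D \<omega> = 0}"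
  have T: "T1 \<in> sets M" "T0 \<in> sets M"
    unfolding T1_def T0_def using D(1) by measurable
  have "T0 = space M - T1"
    using D(2) unfolding T0_def T1_def by auto
  then have mT0: "measure M T0 = 1 - p"
    using T by (simp add: prob_compl p_def T1_def)
  have "(\<integral>\<omega>. (D \<omega> - p) / (p * (1 - p)) * U \<omega> + (1 - D \<omega>) / (1 - p) * V \<omega> - c \<partial>M)
      = (\<integral>\<omega>. indicator T1 \<omega> * X \<omega> / p - indicator T0 \<omega> * Z \<omega> / (1 - p) - c \<partial>M)"
  proof (rule Bochner_Integration.integral_cong)
    fix \<omega> assume \<omega>: "\<omega> \<in> space M"
    consider "D \<omega> = 1" | "D \<omega> = 0"
      using D(2)[OF \<omega>] by auto
    then show "(D \<omega> - p) / (p * (1 - p)) * U \<omega> + (1 - D \<omega>) / (1 - p) * V \<omega> - c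
        = indicator T1 \<omega> * X \<omega> / p - indicator T0 \<omega> * Z \<omega> / (1 - p) - c"
    proof cases
      case 1
      then show ?thesis
        using X(2)[OF \<omega>] \<omega> p by (simp add: T1_def T0_def field_simps)
    next
      case 2
      then have "U \<omega> = V \<omega> + Z \<omega>"
        using Z(2)[OF \<omega>] by simp
      moreover have "(0 - p) / (p * (1 - p)) = - 1 / (1 - p)"
        using p by (simp add: field_simps)
      ultimately show ?thesis
        using 2 \<omega> by (simp add: T1_def T0_def diff_divide_distrib add_divide_distrib algebra_simps)
    qed
  qed simp
  also have "\<dots> = (\<integral>\<omega>. indicator T1 \<omega> * X \<omega> \<partial>M) / p - (\<integral>\<omega>. indicator T0 \<omega> * Z \<omega> \<partial>M) / (1 - p) - c"
    using T X(1) Z(1) by (simp add: integrable_indicator_times prob_space)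
  finally show ?thesis
    by (simp add: cond_mean_def mT0 p_def T1_def[symmetric] T0_def[symmetric])
qed

lemma (in prob_space) did_ipw_decomposition:
  fixes D A Y0_0 Y0_01 Y0_11 Y1_0 Y1_1 :: "'a \<Rightarrow> real" and g :: "real \<Rightarrow> real"
  defines "p \<equiv> measure M {\<omega> \<in> space M. D \<omega> = 1}"
  assumes D: "D \<in> borel_measurable M" "\<And>\<omega>. \<omega> \<in> space M \<Longrightarrow> D \<omega> \<in> {0, 1}"
    and p: "0 < p" "p < 1"
    and integ: "integrable M (\<lambda>\<omega>. g (Y0_0 \<omega>))" "integrable M (\<lambda>\<omega>. g (Y1_0 \<omega>))"
      "integrable M (\<lambda>\<omega>. g (Y1_1 \<omega>))"
    and parallel_trends:
      "cond_mean M (\<lambda>\<omega>. g (Y1_0 \<omega>) - g (Y0_0 \<omega>)) {\<omega> \<in> space M. D \<omega> = 1}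
     = cond_mean M (\<lambda>\<omega>. g (Y1_0 \<omega>) - g (Y0_0 \<omega>)) {\<omega> \<in> space M. D \<omega> = 0}"
  shows "(\<integral>\<omega>. (D \<omega> - p) / (p * (1 - p)) * g (obs_Y1 D Y1_1 Y1_0 \<omega>)
            + (1 - D \<omega>) / (1 - p) * g (obs_Y0 D A Y0_0 Y0_01 Y0_11 \<omega>) - c \<partial>M)
    = cond_mean M (\<lambda>\<omega>. g (Y1_1 \<omega>) - g (Y1_0 \<omega>)) {\<omega> \<in> space M. D \<omega> = 1}
      + cond_mean M (\<lambda>\<omega>. g (Y0_0 \<omega>)) {\<omega> \<in> space M. D \<omega> = 1} - c"
proof -
  define T1 where "T1 = {\<omega> \<in> space M. D \<omega> = 1}"
  have T1: "T1 \<in> sets M"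
    unfolding T1_def using D(1) by measurable
  have "(\<integral>\<omega>. (D \<omega> - p) / (p * (1 - p)) * g (obs_Y1 D Y1_1 Y1_0 \<omega>)
            + (1 - D \<omega>) / (1 - p) * g (obs_Y0 D A Y0_0 Y0_01 Y0_11 \<omega>) - c \<partial>M)
      = cond_mean M (\<lambda>\<omega>. g (Y1_1 \<omega>)) T1
        - cond_mean M (\<lambda>\<omega>. g (Y1_0 \<omega>) - g (Y0_0 \<omega>)) {\<omega> \<in> space M. D \<omega> = 0} - c"
    unfolding p_def T1_def
    by (rule integral_did_ipw) (use D p integ in \<open>auto simp: p_def obs_Y1_def obs_Y0_def\<close>)
  also have "\<dots> = cond_mean M (\<lambda>\<omega>. g (Y1_1 \<omega>)) T1
        - (cond_mean M (\<lambda>\<omega>. g (Y1_0 \<omega>)) T1 - cond_mean M (\<lambda>\<omega>. g (Y0_0 \<omega>)) T1) - c"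
    using parallel_trends cond_mean_diff[OF T1 integ(2,1)] by (simp add: T1_def)
  also have "\<dots> = cond_mean M (\<lambda>\<omega>. g (Y1_1 \<omega>) - g (Y1_0 \<omega>)) T1
      + cond_mean M (\<lambda>\<omega>. g (Y0_0 \<omega>)) T1 - c"
    using cond_mean_diff[OF T1 integ(3,2)] by simp
  finally show ?thesis
    unfolding T1_def .
qed

lemma (in finite_measure) treated_baseline_cond_mean_in_interval:
  fixes D A Y0_0 Y0_01 Y0_11 :: "'a \<Rightarrow> real" and g :: "real \<Rightarrow> real"
  assumes meas: "D \<in> borel_measurable M" "A \<in> borel_measurable M"
    and binary: "\<And>\<omega>. \<omega> \<in> space M \<Longrightarrow> D \<omega> \<in> {0, 1} \<and> A \<omega> \<in> {0, 1}"
    and pos: "0 < measure M {\<omega> \<in> space M. D \<omega> = 1 \<and> A \<omega> = 0}"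
      "0 < measure M {\<omega> \<in> space M. D \<omega> = 1 \<and> A \<omega> = 1}"
    and integ: "integrable M (\<lambda>\<omega>. g (Y0_0 \<omega>))"
    and no_anticip_untreated: "\<And>\<omega>. \<omega> \<in> space M \<Longrightarrow> Y0_0 \<omega> = Y0_01 \<omega>"
    and anticip_indep:
      "cond_mean M (\<lambda>\<omega>. g (Y0_0 \<omega>)) {\<omega> \<in> space M. D \<omega> = 1 \<and> A \<omega> = 0}
     = cond_mean M (\<lambda>\<omega>. g (Y0_0 \<omega>)) {\<omega> \<in> space M. D \<omega> = 1 \<and> A \<omega> = 1}"
    and bounded: "\<And>\<omega>. \<omega> \<in> space M \<Longrightarrow> g (obs_Y0 D A Y0_0 Y0_01 Y0_11 \<omega>) \<in> {a..b}"
  shows "cond_mean M (\<lambda>\<omega>. g (Y0_0 \<omega>)) {\<omega> \<in> space M. D \<omega> = 1} \<in> {a..b}"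
proof -
  define J0 where "J0 = {\<omega> \<in> space M. D \<omega> = 1 \<and> A \<omega> = 0}"
  define J1 where "J1 = {\<omega> \<in> space M. D \<omega> = 1 \<and> A \<omega> = 1}"
  have J: "J0 \<in> sets M" "J1 \<in> sets M"
    unfolding J0_def J1_def using meas by measurable
  have posJ: "0 < measure M J0" "0 < measure M J1"
    using pos unfolding J0_def J1_def .
  have disj: "J0 \<inter> J1 = {}"
    unfolding J0_def J1_def by auto
  have "{\<omega> \<in> space M. D \<omega> = 1} = J0 \<union> J1"
    using binary unfolding J0_def J1_def by auto
  then have "cond_mean M (\<lambda>\<omega>. g (Y0_0 \<omega>)) {\<omega> \<in> space M. D \<omega> = 1}
      = cond_mean M (\<lambda>\<omega>. g (Y0_0 \<omega>)) J0"
    using cond_mean_Un_eq[OF J disj posJ integ] anticip_indep unfolding J0_def J1_def by simp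
  also have "\<dots> \<in> {a..b}"
  proof (rule cond_mean_in_interval[OF J(1) posJ(1) integ])
    fix \<omega> assume "\<omega> \<in> J0"
    with bounded[of \<omega>] no_anticip_untreated[of \<omega>] show "g (Y0_0 \<omega>) \<in> {a..b}"
      by (simp add: J0_def obs_Y0_def)
  qed
  finally show ?thesis .
qed

lemma (in prob_space) did_anticipation_bounds:
  fixes D A Y0_0 Y0_01 Y0_11 Y1_0 Y1_1 :: "'a \<Rightarrow> real" and g :: "real \<Rightarrow> real"
  defines "p \<equiv> measure M {\<omega> \<in> space M. D \<omega> = 1}"
  assumes meas: "D \<in> borel_measurable M" "A \<in> borel_measurable M"
    and binary: "\<And>\<omega>. \<omega> \<in> space M \<Longrightarrow> D \<omega> \<in> {0, 1} \<and> A \<omega> \<in> {0, 1}"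
    and integ: "integrable M (\<lambda>\<omega>. g (Y0_0 \<omega>))" "integrable M (\<lambda>\<omega>. g (Y1_0 \<omega>))"
      "integrable M (\<lambda>\<omega>. g (Y1_1 \<omega>))"
    and p: "0 < p" "p < 1"
    and pA: "0 < measure M {\<omega> \<in> space M. D \<omega> = 1 \<and> A \<omega> = 0}"
      "0 < measure M {\<omega> \<in> space M. D \<omega> = 1 \<and> A \<omega> = 1}"
    and no_anticip_untreated: "\<And>\<omega>. \<omega> \<in> space M \<Longrightarrow> Y0_0 \<omega> = Y0_01 \<omega>"
    and parallel_trends:
      "cond_mean M (\<lambda>\<omega>. g (Y1_0 \<omega>) - g (Y0_0 \<omega>)) {\<omega> \<in> space M. D \<omega> = 1}
     = cond_mean M (\<lambda>\<omega>. g (Y1_0 \<omega>) - g (Y0_0 \<omega>)) {\<omega> \<in> space M. D \<omega> = 0}"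
    and anticip_indep:
      "cond_mean M (\<lambda>\<omega>. g (Y0_0 \<omega>)) {\<omega> \<in> space M. D \<omega> = 1 \<and> A \<omega> = 0}
     = cond_mean M (\<lambda>\<omega>. g (Y0_0 \<omega>)) {\<omega> \<in> space M. D \<omega> = 1 \<and> A \<omega> = 1}"
    and bounded: "\<And>\<omega>. \<omega> \<in> space M \<Longrightarrow> g (obs_Y0 D A Y0_0 Y0_01 Y0_11 \<omega>) \<in> {a..b}"
  shows "(\<integral>\<omega>. (D \<omega> - p) / (p * (1 - p)) * g (obs_Y1 D Y1_1 Y1_0 \<omega>)
            + (1 - D \<omega>) / (1 - p) * g (obs_Y0 D A Y0_0 Y0_01 Y0_11 \<omega>) - b \<partial>M)
      \<le> cond_mean M (\<lambda>\<omega>. g (Y1_1 \<omega>) - g (Y1_0 \<omega>)) {\<omega> \<in> space M. D \<omega> = 1}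
    \<and> cond_mean M (\<lambda>\<omega>. g (Y1_1 \<omega>) - g (Y1_0 \<omega>)) {\<omega> \<in> space M. D \<omega> = 1}
      \<le> (\<integral>\<omega>. (D \<omega> - p) / (p * (1 - p)) * g (obs_Y1 D Y1_1 Y1_0 \<omega>)
            + (1 - D \<omega>) / (1 - p) * g (obs_Y0 D A Y0_0 Y0_01 Y0_11 \<omega>) - a \<partial>M)"
proof -
  have "cond_mean M (\<lambda>\<omega>. g (Y0_0 \<omega>)) {\<omega> \<in> space M. D \<omega> = 1} \<in> {a..b}"
    by (rule treated_baseline_cond_mean_in_interval[OF meas binary pA integ(1) no_anticip_untreated
          anticip_indep bounded])
  moreover note decomposition =
    did_ipw_decomposition[where g = g and ?Y0_0.0 = Y0_0 and ?Y1_0.0 = Y1_0 and ?Y1_1.0 = Y1_1,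
      OF meas(1) _ p[unfolded p_def] integ parallel_trends]
  ultimately show ?thesis
    using binary decomposition[where c = b] decomposition[where c = a] unfolding p_def by auto
qed

theorem theoremA3:
  fixes M :: "'s measure" and n :: nat
    and Y0_01 Y0_11 Y0_0 Y1_0 Y1_1 D A :: "nat \<Rightarrow> 's \<Rightarrow> real"
    and g :: "real \<Rightarrow> real" and a b :: real
  assumes P: "prob_space M"
    and g_meas: "g \<in> borel_measurable borel"
    and ab: "a \<le> b"
    and meas: "\<And>i. i \<in> {1..n} \<Longrightarrow>
          Y0_01 i \<in> borel_measurable M \<and> Y0_11 i \<in> borel_measurable M \<and>
          Y0_0 i \<in> borel_measurable M \<and> Y1_0 i \<in> borel_measurable M \<and>
          Y1_1 i \<in> borel_measurable M \<and> D i \<in> borel_measurable M \<and> A i \<in> borel_measurable M"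
    and binary: "\<And>i \<omega>. i \<in> {1..n} \<Longrightarrow> \<omega> \<in> space M \<Longrightarrow> D i \<omega> \<in> {0, 1} \<and> A i \<omega> \<in> {0, 1}"
    and integ: "\<And>i. i \<in> {1..n} \<Longrightarrow>
          integrable M (\<lambda>\<omega>. g (Y0_01 i \<omega>)) \<and> integrable M (\<lambda>\<omega>. g (Y0_11 i \<omega>)) \<and>
          integrable M (\<lambda>\<omega>. g (Y0_0 i \<omega>)) \<and> integrable M (\<lambda>\<omega>. g (Y1_0 i \<omega>)) \<and>
          integrable M (\<lambda>\<omega>. g (Y1_1 i \<omega>))"
    and pD: "\<And>i. i \<in> {1..n} \<Longrightarrow>
          0 < measure M {\<omega> \<in> space M. D i \<omega> = 1} \<and> measure M {\<omega> \<in> space M. D i \<omega> = 1} < 1"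
    and pA: "\<And>i. i \<in> {1..n} \<Longrightarrow>
          0 < measure M {\<omega> \<in> space M. D i \<omega> = 1 \<and> A i \<omega> = 0} \<and>
          0 < measure M {\<omega> \<in> space M. D i \<omega> = 1 \<and> A i \<omega> = 1}"
    and iid_indep: "prob_space.indep_vars M (\<lambda>_. borel)
          (\<lambda>i \<omega>. (Y0_01 i \<omega>, Y0_11 i \<omega>, Y0_0 i \<omega>, Y1_0 i \<omega>, Y1_1 i \<omega>, D i \<omega>, A i \<omega>)) {1..n}"
    and iid_ident: "\<And>i. i \<in> {1..n} \<Longrightarrow>
          distr M borel (\<lambda>\<omega>. (Y0_01 i \<omega>, Y0_11 i \<omega>, Y0_0 i \<omega>, Y1_0 i \<omega>, Y1_1 i \<omega>, D i \<omega>, A i \<omega>))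
        = distr M borel (\<lambda>\<omega>. (Y0_01 1 \<omega>, Y0_11 1 \<omega>, Y0_0 1 \<omega>, Y1_0 1 \<omega>, Y1_1 1 \<omega>, D 1 \<omega>, A 1 \<omega>))"
    and no_anticip_untreated: "\<And>i \<omega>. i \<in> {1..n} \<Longrightarrow> \<omega> \<in> space M \<Longrightarrow> Y0_0 i \<omega> = Y0_01 i \<omega>"
    and parallel_trends: "\<And>i. i \<in> {1..n} \<Longrightarrow>
          cond_mean M (\<lambda>\<omega>. g (Y1_0 i \<omega>) - g (Y0_0 i \<omega>)) {\<omega> \<in> space M. D i \<omega> = 1}
        = cond_mean M (\<lambda>\<omega>. g (Y1_0 i \<omega>) - g (Y0_0 i \<omega>)) {\<omega> \<in> space M. D i \<omega> = 0}"
    and anticip_indep: "\<And>i. i \<in> {1..n} \<Longrightarrow>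
          cond_mean M (\<lambda>\<omega>. g (Y0_0 i \<omega>)) {\<omega> \<in> space M. D i \<omega> = 1 \<and> A i \<omega> = 0}
        = cond_mean M (\<lambda>\<omega>. g (Y0_0 i \<omega>)) {\<omega> \<in> space M. D i \<omega> = 1 \<and> A i \<omega> = 1}"
    and bounded: "\<And>i \<omega>. i \<in> {1..n} \<Longrightarrow> \<omega> \<in> space M \<Longrightarrow>
          g (obs_Y0 (D i) (A i) (Y0_0 i) (Y0_01 i) (Y0_11 i) \<omega>) \<in> {a..b}"
  shows "\<forall>i \<in> {1..n}.
    (let p = measure M {\<omega> \<in> space M. D i \<omega> = 1};
         Y1 = obs_Y1 (D i) (Y1_1 i) (Y1_0 i);
         Y0 = obs_Y0 (D i) (A i) (Y0_0 i) (Y0_01 i) (Y0_11 i);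
         mu_g = cond_mean M (\<lambda>\<omega>. g (Y1_1 i \<omega>) - g (Y1_0 i \<omega>)) {\<omega> \<in> space M. D i \<omega> = 1};
         mu_l = (\<integral>\<omega>. (D i \<omega> - p) / (p * (1 - p)) * g (Y1 \<omega>)
                     + (1 - D i \<omega>) / (1 - p) * g (Y0 \<omega>) - b \<partial>M);
         mu_u = (\<integral>\<omega>. (D i \<omega> - p) / (p * (1 - p)) * g (Y1 \<omega>)
                     + (1 - D i \<omega>) / (1 - p) * g (Y0 \<omega>) - a \<partial>M)
     in mu_l \<le> mu_g \<and> mu_g \<le> mu_u)"
  by (unfold Let_def, intro ballI prob_space.did_anticipation_bounds[OF P])
    (use meas binary integ pD pA no_anticip_untreated parallel_trends anticip_indep bounded in blast)+

end
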